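(* Let $n\geq 1$, let $p$ be a prime, let $R\subset E_n=\{1,\dots,n\}$ and let $S\subset E_n$ be a nonempty subset. Then there exists exactly one subset $T\subset E_n$ such that $T$ is $(R,S)$-admissible and $T$ is $i$-positive for every $i\in S$. Equivalently, there exists a unique positive admissible homogeneous $S$-adapted $p$-cone, namely $\{x\in\mathbb{Z}^n : F^{(i)}_T(x)\leq 0 \text{ for all } i\in S\}$ for this $T$.
   Context: Indices of tuples $x=(x_1,\dots,x_n)\in\mathbb{Z}^n$ and elements of $E_n$ are taken modulo $n$ (e.g. $x_{n+1}=x_1$, and $0$ denotes $n$). For $T\subset E_n$ and $i\in E_n$ put $\delta_T^{(i)}=-1$ if $i\in T$ and $\delta_T^{(i)}=1$ if $i\notin T$. For $d\in E_n$ and $T\subset E_n$, the $p$-expression with starting index $d$ is the linear form $F^{(d)}_T(x)=\sum_{i=0}^{n-1}p^i\,\delta_T^{(d+i)}\,x_{d+i}$ on $\mathbb{Z}^n$. An $S$-adapted $p$-cone is a cone of the form $\{x\in\mathbb{Z}^n: F^{(i)}_{T^{(i)}}(x)\leq 0 \ \forall i\in S\}$ attached to a family $(T^{(i)})_{i\in S}$ of subsets of $E_n$; it is homogeneous if all $T^{(i)}$ equal a common $T$ (so homogeneous $S$-adapted $p$-cones are parametrized by subsets $T$). A subset $T\subset E_n$ is $(R,S)$-admissible if for every $i\in E_n$ with $i+1\notin S$: if $i\notin R$ then exactly one of $i,i+1$ lies in $T$, and if $i\in R$ then either both or neither of $i,i+1$ lie in $T$. For $i\in E_n$, $T$ is $i$-positive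 if ($i-1\in T \iff i-1\in R$). An $S$-adapted $p$-cone is admissible (resp. positive) if each $T^{(i)}$ is $(R,S)$-admissible (resp. $i$-positive). *)

theory Defs
  imports "HOL-Computational_Algebra.Primes"
begin

definition nxt :: "nat \<Rightarrow> nat \<Rightarrow> nat" where
  "nxt n i = (if i = n then 1 else i + 1)"

definition prv :: "nat \<Rightarrow> nat \<Rightarrow> nat" where
  "prv n i = (if i = 1 then n else i - 1)"

definition admissible :: "nat \<Rightarrow> nat set \<Rightarrow> nat set \<Rightarrow> nat set \<Rightarrow> bool" where
  "admissible n R S T \<longleftrightarrow>
     (\<forall>i\<in>{1..n}. nxt n i \<notin> S \<longrightarrow>
        ((i \<notin> R \<longrightarrow> (i \<in> T \<longleftrightarrow> nxt n i \<notin> T)) \<and>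
         (i \<in> R \<longrightarrow> (i \<in> T \<longleftrightarrow> nxt n i \<in> T))))"

definition positive_at :: "nat \<Rightarrow> nat set \<Rightarrow> nat set \<Rightarrow> nat \<Rightarrow> bool" where
  "positive_at n R T i \<longleftrightarrow> (prv n i \<in> T \<longleftrightarrow> prv n i \<in> R)"

end

(* Admissibility (where nxt j is not in S) and positivity at nxt j (where it is) together
   say that membership of j in T is determined by membership of nxt j: a backward
   recurrence x j = F j (x (nxt j)) around the cycle in which F j is constant whenever
   nxt j is in S. As S is nonempty, every orbit of nxt meets S within n steps, so
   unrolling the recurrence n times yields a value independent of the unknown seed, and
   this is the one and only solution. *)

theory Submission
  imports Defs
begin

lemma nxt_in_range: "j \<in> {1..n} \<Longrightarrow> nxt n j \<in> {1..n}"
  by (auto simp: nxt_def)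

lemma prv_in_range: "i \<in> {1..n} \<Longrightarrow> prv n i \<in> {1..n}"
  by (auto simp: prv_def)

lemma nxt_prv: "i \<in> {1..n} \<Longrightarrow> nxt n (prv n i) = i"
  by (auto simp: nxt_def prv_def)

lemma prv_nxt: "j \<in> {1..n} \<Longrightarrow> prv n (nxt n j) = j"
  by (auto simp: nxt_def prv_def)

lemma funpow_nxt_Suc: "i < n \<Longrightarrow> (nxt n ^^ k) (Suc i) = Suc ((i + k) mod n)"
  by (induction k) (simp_all add: nxt_def mod_Suc)

lemma funpow_nxt_period:
  assumes "j \<in> {1..n}"
  shows "(nxt n ^^ n) j = j"
proof -
  from assms obtain i where "j = Suc i" "i < n"
    by (cases j) auto
  then show ?thesis by (simp add: funpow_nxt_Suc)
qed

lemma nxt_reaches: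
  assumes "j \<in> {1..n}" and "s \<in> {1..n}"
  obtains d where "0 < d" "d \<le> n" "(nxt n ^^ d) j = s"
proof -
  from assms obtain i r where ir: "j = Suc i" "s = Suc r" "i < n" "r < n"
    by (cases j; cases s) auto
  show thesis
  proof (cases "i < r")
    case True
    then have "i + (r - i) = r" by simp
    with ir True show ?thesis
      by (intro that[of "r - i"]) (auto simp: funpow_nxt_Suc)
  next
    case False
    then have "i + (n + r - i) = r + n" using ir by simp
    with ir False show ?thesis
      by (intro that[of "n + r - i"]) (auto simp: funpow_nxt_Suc)
  qed
qed

text \<open>The seed \<open>undefined\<close> is irrelevant as soon as the orbit meets a point where
  \<open>F\<close> is constant.\<close>

primrec unroll :: "nat \<Rightarrow> (nat \<Rightarrow> 'a \<Rightarrow> 'a) \<Rightarrow> nat \<Rightarrow> nat \<Rightarrow> 'a" where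
  "unroll n F 0 j = undefined"
| "unroll n F (Suc m) j = F j (unroll n F m (nxt n j))"

locale cyclic_recurrence =
  fixes n :: nat and S :: "nat set" and F :: "nat \<Rightarrow> 'a \<Rightarrow> 'a"
  assumes S_range: "S \<subseteq> {1..n}" and S_nonempty: "S \<noteq> {}"
    and F_reset: "\<And>j a b. j \<in> {1..n} \<Longrightarrow> nxt n j \<in> S \<Longrightarrow> F j a = F j b"
begin

definition solves :: "(nat \<Rightarrow> 'a) \<Rightarrow> bool" where
  "solves x \<longleftrightarrow> (\<forall>j\<in>{1..n}. x j = F j (x (nxt n j)))"

lemma reaches_S:
  assumes "j \<in> {1..n}"
  obtains d where "0 < d" "d \<le> n" "(nxt n ^^ d) j \<in> S"
proof -
  obtain s where s: "s \<in> S" using S_nonempty by blast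
  with S_range have "s \<in> {1..n}" by blast
  with nxt_reaches[OF assms this] that s show thesis by metis
qed

lemma unroll_stable:
  "j \<in> {1..n} \<Longrightarrow> 0 < d \<Longrightarrow> d \<le> m \<Longrightarrow> (nxt n ^^ d) j \<in> S \<Longrightarrow> unroll n F m j = unroll n F d j"
proof (induction d arbitrary: j m)
  case 0
  then show ?case by simp
next
  case (Suc d)
  from Suc.prems obtain m' where m: "m = Suc m'" by (cases m) auto
  show ?case
  proof (cases "nxt n j \<in> S")
    case True
    have "unroll n F m j = F j (unroll n F m' (nxt n j))"
      using m by simp
    also have "\<dots> = F j (unroll n F d (nxt n j))"
      using Suc.prems(1) True by (rule F_reset)
    finally show ?thesis by simp
  next
    case False
    with Suc.prems have "0 < d" by (cases d) auto
    moreover have "(nxt n ^^ d) (nxt n j) \<in> S"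
      using Suc.prems(4) unfolding funpow_Suc_right by simp
    ultimately have "unroll n F m' (nxt n j) = unroll n F d (nxt n j)"
      using Suc.IH[of "nxt n j" m'] Suc.prems(1,3) m nxt_in_range by simp
    with m show ?thesis by simp
  qed
qed

lemma solves_unroll: "solves (unroll n F n)"
  unfolding solves_def
proof
  fix j assume j: "j \<in> {1..n}"
  then obtain m where n: "n = Suc m" by (cases n) auto
  then have "unroll n F n j = F j (unroll n F m (nxt n j))"
    by simp
  also have "\<dots> = F j (unroll n F n (nxt n j))"
  proof (cases "nxt n j \<in> S")
    case True
    with j show ?thesis by (rule F_reset)
  next
    case False
    obtain d where d: "0 < d" "d \<le> n" "(nxt n ^^ d) (nxt n j) \<in> S"
      using reaches_S nxt_in_range[OF j] by blast
    have "d \<noteq> n"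
      using d(3) False funpow_nxt_period[OF nxt_in_range[OF j]] by auto
    with d n have "d \<le> m" by simp
    then have "unroll n F m (nxt n j) = unroll n F d (nxt n j)"
      using d nxt_in_range[OF j] by (intro unroll_stable)
    moreover have "unroll n F n (nxt n j) = unroll n F d (nxt n j)"
      using d nxt_in_range[OF j] by (intro unroll_stable)
    ultimately show ?thesis by simp
  qed
  finally show "unroll n F n j = F j (unroll n F n (nxt n j))" .
qed

lemma solution_eq_unroll:
  assumes x: "solves x" and j: "j \<in> {1..n}"
  shows "x j = unroll n F n j"
proof -
  have x_unroll: "x j = unroll n F d j" if "j \<in> {1..n}" "0 < d" "(nxt n ^^ d) j \<in> S" for d j
    using that
  proof (induction d arbitrary: j)
    case 0
    then show ?case by simp
  next
    case (Suc d)
    have "x j = F j (x (nxt n j))"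
      using x Suc.prems(1) by (simp add: solves_def)
    also have "\<dots> = F j (unroll n F d (nxt n j))"
    proof (cases "nxt n j \<in> S")
      case True
      with Suc.prems(1) show ?thesis by (rule F_reset)
    next
      case False
      with Suc.prems have "0 < d" by (cases d) auto
      moreover have "(nxt n ^^ d) (nxt n j) \<in> S"
        using Suc.prems(3) unfolding funpow_Suc_right by simp
      ultimately show ?thesis
        using Suc.IH nxt_in_range[OF Suc.prems(1)] by metis
    qed
    finally show ?case by simp
  qed
  obtain d where "0 < d" "d \<le> n" "(nxt n ^^ d) j \<in> S"
    using reaches_S j by blast
  with j x_unroll unroll_stable show ?thesis
    by metis
qed

lemma solves_iff_eq_unroll: "solves x \<longleftrightarrow> (\<forall>j\<in>{1..n}. x j = unroll n F n j)"
proof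
  assume "solves x"
  then show "\<forall>j\<in>{1..n}. x j = unroll n F n j"
    using solution_eq_unroll by blast
next
  assume eq: "\<forall>j\<in>{1..n}. x j = unroll n F n j"
  show "solves x"
    unfolding solves_def
  proof
    fix j assume j: "j \<in> {1..n}"
    have "x j = unroll n F n j"
      using eq j by blast
    also have "\<dots> = F j (unroll n F n (nxt n j))"
      using solves_unroll j unfolding solves_def by blast
    also have "\<dots> = F j (x (nxt n j))"
      using eq nxt_in_range[OF j] by simp
    finally show "x j = F j (x (nxt n j))" .
  qed
qed

end

lemma admissible_positive_iff:
  assumes "S \<subseteq> {1..n}"
  shows "admissible n R S T \<and> (\<forall>i\<in>S. positive_at n R T i) \<longleftrightarrow>
    (\<forall>j\<in>{1..n}. (j \<in> T) = ((nxt n j \<in> S \<or> nxt n j \<in> T) = (j \<in> R)))"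
    (is "?lhs \<longleftrightarrow> (\<forall>j\<in>{1..n}. ?rec j)")
proof
  assume lhs: ?lhs
  show "\<forall>j\<in>{1..n}. ?rec j"
  proof
    fix j assume j: "j \<in> {1..n}"
    show "?rec j"
    proof (cases "nxt n j \<in> S")
      case True
      with lhs have "positive_at n R T (nxt n j)" by blast
      with True j show ?thesis by (simp add: positive_at_def prv_nxt)
    next
      case False
      with lhs j show ?thesis unfolding admissible_def by blast
    qed
  qed
next
  assume rec: "\<forall>j\<in>{1..n}. ?rec j"
  have "admissible n R S T"
    unfolding admissible_def using rec by blast
  moreover have "positive_at n R T i" if "i \<in> S" for i
  proof -
    from that assms have i: "i \<in> {1..n}" by blast
    with rec prv_in_range have "?rec (prv n i)" by blast
    with that i show ?thesis by (simp add: positive_at_def nxt_prv)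
  qed
  ultimately show ?lhs by blast
qed

theorem theoremA:
  fixes n p :: nat and R S :: "nat set"
  assumes "n \<ge> 1" and "prime p"
    and "R \<subseteq> {1..n}" and "S \<subseteq> {1..n}" and "S \<noteq> {}"
  shows "\<exists>!T. T \<subseteq> {1..n} \<and> admissible n R S T \<and> (\<forall>i\<in>S. positive_at n R T i)"
proof -
  define F where "F j b = ((nxt n j \<in> S \<or> b) = (j \<in> R))" for j b
  interpret cyclic_recurrence n S F
    by (intro cyclic_recurrence.intro assms(4,5)) (simp add: F_def)
  define T0 where "T0 = {j \<in> {1..n}. unroll n F n j}"
  have "T \<subseteq> {1..n} \<and> admissible n R S T \<and> (\<forall>i\<in>S. positive_at n R T i) \<longleftrightarrow> T = T0"
    for T
  proof -
    have "admissible n R S T \<and> (\<forall>i\<in>S. positive_at n R T i) \<longleftrightarrow> solves (\<lambda>j. j \<in> T)"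
      by (simp add: admissible_positive_iff[OF assms(4)] solves_def F_def)
    also have "\<dots> \<longleftrightarrow> (\<forall>j\<in>{1..n}. j \<in> T \<longleftrightarrow> j \<in> T0)"
      by (simp add: solves_iff_eq_unroll T0_def)
    finally show ?thesis
      by (auto simp: T0_def)
  qed
  then show ?thesis
    by simp
qed

end
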